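(* Let $q$ be a prime power, $h\geq 2$, let $f,g:\mathbb{F}_{q^h}\to\mathbb{F}_q$ be nonzero $\mathbb{F}_q$-linear functionals and $\alpha\in\mathbb{F}_{q^h}\setminus\mathbb{F}_q$. Define the point sets of $\mathrm{PG}(2,q^h)$ $\mathcal{L}=\{(x:f(x):y): x\in\mathbb{F}_{q^h},\ y\in\mathbb{F}_q,\ (x,y)\neq(0,0)\}$ and $\mathcal{L}'=\{(y':x':g(x')+y'\alpha): x'\in\mathbb{F}_{q^h},\ y'\in\mathbb{F}_q,\ (x',y')\neq(0,0)\}$. Suppose that (1) $g(1)=g(\alpha)=1$; (2) $f(1/\alpha)\neq 0$; (3) $f\left(\frac{k-1}{k(k-1)\alpha-k^2}\right)\neq 1$ for all $k\in\mathbb{F}_q\setminus\{0,1\}$. Then $\mathcal{L}$ and $\mathcal{L}'$ are disjoint.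
   Context: Points of $\mathrm{PG}(2,q^h)$ are written in homogeneous coordinates $(a:b:c)$. *)

theory Defs
  imports "HOL-Computational_Algebra.Primes"
begin

text \<open>The field F_{q^h} is modelled by a finite field type 'a with CARD('a) = q^h.
  Its subfield F_q is the set of roots of X^q - X.\<close>

definition subfield_Fq :: "nat \<Rightarrow> 'a::field set" where
  "subfield_Fq q = {x. x ^ q = x}"

definition prime_power :: "nat \<Rightarrow> bool" where
  "prime_power q \<longleftrightarrow> (\<exists>p k. prime p \<and> k > 0 \<and> q = p ^ k)"

definition Fq_linear_functional :: "nat \<Rightarrow> ('a::field \<Rightarrow> 'a) \<Rightarrow> bool" where
  "Fq_linear_functional q f \<longleftrightarrow>
     (\<forall>x. f x \<in> subfield_Fq q) \<and>
     (\<forall>x y. f (x + y) = f x + f y) \<and>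
     (\<forall>c \<in> subfield_Fq q. \<forall>x. f (c * x) = c * f x)"

definition proj_point :: "'a::field \<Rightarrow> 'a \<Rightarrow> 'a \<Rightarrow> ('a \<times> 'a \<times> 'a) set" where
  "proj_point a b c = {(l * a, l * b, l * c) | l. l \<noteq> 0}"

definition setL :: "nat \<Rightarrow> ('a::field \<Rightarrow> 'a) \<Rightarrow> ('a \<times> 'a \<times> 'a) set set" where
  "setL q f = {proj_point x (f x) y | x y. y \<in> subfield_Fq q \<and> (x, y) \<noteq> (0, 0)}"

definition setL' :: "nat \<Rightarrow> ('a::field \<Rightarrow> 'a) \<Rightarrow> 'a \<Rightarrow> ('a \<times> 'a \<times> 'a) set set" where
  "setL' q g \<alpha> = {proj_point y' x' (g x' + y' * \<alpha>) | x' y'.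
      y' \<in> subfield_Fq q \<and> (x', y') \<noteq> (0, 0)}"

end

theory Submission
  imports Defs
begin

text \<open>
  Scaling a common point so that its L-coordinates are (x : f(x) : y) with x \<noteq> 0, the
  L'-description forces f(x) g(1/x) + \<alpha> = y/x with y in F_q. If f(x) = 0 this says
  x = y/\<alpha>, so f(x) = y f(1/\<alpha>) \<noteq> 0. If y = 0, applying g to f(x) g(1/x) + \<alpha> = 0 gives
  f(x) g(1/x) = -1 and hence \<alpha> = 1. Otherwise applying g to
  1/x = (f(x) g(1/x) + \<alpha>)/y and using g(1) = g(\<alpha>) = 1 determines g(1/x), and with
  k = f(x)/y one solves for x/f(x) = (k-1)/(k(k-1)\<alpha> - k^2), an element that f maps to 1.
\<close>

lemma subfield_Fq_one: "1 \<in> subfield_Fq q"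
  by (simp add: subfield_Fq_def)

lemma subfield_Fq_mult:
  "a \<in> subfield_Fq q \<Longrightarrow> b \<in> subfield_Fq q \<Longrightarrow> a * b \<in> subfield_Fq q"
  by (simp add: subfield_Fq_def power_mult_distrib)

lemma subfield_Fq_divide:
  "a \<in> subfield_Fq q \<Longrightarrow> b \<in> subfield_Fq q \<Longrightarrow> a / b \<in> subfield_Fq q"
  by (simp add: subfield_Fq_def power_divide)

lemma Fq_linear_functionalD:
  assumes "Fq_linear_functional q f"
  shows Fq_linear_functional_mem: "f x \<in> subfield_Fq q"
    and Fq_linear_functional_add: "f (x + y) = f x + f y"
    and Fq_linear_functional_scale: "c \<in> subfield_Fq q \<Longrightarrow> f (c * x) = c * f x"
  using assms by (auto simp: Fq_linear_functional_def)

lemma Fq_linear_functional_zero: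
  assumes "Fq_linear_functional q f"
  shows "f 0 = 0"
  using Fq_linear_functional_add[OF assms, of 0 0]
  by (metis add.right_neutral add_left_cancel)

lemma proj_point_eq_imp_scalar_multiple:
  assumes "proj_point a b c = proj_point a' b' c'"
  shows "\<exists>\<mu>. \<mu> \<noteq> 0 \<and> a' = \<mu> * a \<and> b' = \<mu> * b \<and> c' = \<mu> * c"
proof -
  have "(a', b', c') \<in> proj_point a' b' c'"
    unfolding proj_point_def by (auto intro: exI[of _ 1])
  then have "(a', b', c') \<in> proj_point a b c"
    by (simp only: assms)
  then obtain \<mu> where "\<mu> \<noteq> 0" "(a', b', c') = (\<mu> * a, \<mu> * b, \<mu> * c)"
    unfolding proj_point_def mem_Collect_eq by (elim exE conjE)
  then show ?thesis by blast
qed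

lemma setL_setL'_common_point_equation:
  assumes f: "Fq_linear_functional q f" and g: "Fq_linear_functional q g"
    and P: "P \<in> setL q f" "P \<in> setL' q g \<alpha>"
  obtains x y where "x \<noteq> 0" "y \<in> subfield_Fq q" "f x * g (1 / x) + \<alpha> = y / x"
proof -
  obtain x y x' y' where y: "y \<in> subfield_Fq q"
    and y': "y' \<in> subfield_Fq q" "(x', y') \<noteq> (0, 0)"
    and eq: "proj_point x (f x) y = proj_point y' x' (g x' + y' * \<alpha>)"
    using P unfolding setL_def setL'_def by blast
  obtain \<mu> where "\<mu> \<noteq> 0" and y'_eq: "y' = \<mu> * x" and x'_eq: "x' = \<mu> * f x"
    and third: "g x' + y' * \<alpha> = \<mu> * y"
    using proj_point_eq_imp_scalar_multiple[OF eq] by blast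
  have "x \<noteq> 0"
    using y' y'_eq x'_eq Fq_linear_functional_zero[OF f] by auto
  with \<open>\<mu> \<noteq> 0\<close> y'_eq have "y' \<noteq> 0" by simp
  have "g x' = g ((y' * f x) * (1 / x))"
    using x'_eq y'_eq \<open>x \<noteq> 0\<close> by simp
  also have "\<dots> = y' * f x * g (1 / x)"
    using subfield_Fq_mult[OF y'(1) Fq_linear_functional_mem[OF f]]
    by (rule Fq_linear_functional_scale[OF g])
  finally have "g x' = y' * f x * g (1 / x)" .
  then have "y' * (f x * g (1 / x) + \<alpha>) = y' * (y / x)"
    using third y'_eq \<open>x \<noteq> 0\<close> by (simp add: algebra_simps)
  with \<open>y' \<noteq> 0\<close> have "f x * g (1 / x) + \<alpha> = y / x"
    by (metis mult_left_cancel)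
  with \<open>x \<noteq> 0\<close> y show thesis by (rule that)
qed

lemma quotient_eq_if_common_point_relations:
  fixes \<alpha> c k m x y :: "'a::field"
  assumes "x \<noteq> 0" "y \<noteq> 0" "k \<noteq> 0" "c = k * y"
    and "m * (y - c) = 1" and "c * m + \<alpha> = y / x"
  shows "x / c = (k - 1) / (k * (k - 1) * \<alpha> - k ^ 2)"
proof -
  have ym: "y * m * (k - 1) = - 1"
    using assms(4,5) by (simp add: algebra_simps)
  then have "k \<noteq> 1" by auto
  have "y * (k - 1) / x = (k - 1) * (k * (y * m) + \<alpha>)"
    using assms(4,6) by (simp add: algebra_simps)
  also have "\<dots> = k * (y * m * (k - 1)) + (k - 1) * \<alpha>"
    by (simp add: algebra_simps)
  also have "\<dots> = (k - 1) * \<alpha> - k"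
    using ym by simp
  finally have "(k - 1) * \<alpha> - k = y * (k - 1) / x" ..
  then have denominator: "k * (k - 1) * \<alpha> - k ^ 2 = k * (y * (k - 1) / x)"
    by (metis mult.assoc power2_eq_square right_diff_distrib)
  show ?thesis
    unfolding denominator using assms(1-4) \<open>k \<noteq> 1\<close> by (simp add: field_simps)
qed

lemma common_point_equation_unsolvable:
  assumes f: "Fq_linear_functional q f" and g: "Fq_linear_functional q g"
    and \<alpha>: "\<alpha> \<notin> subfield_Fq q" and g1: "g 1 = 1" and g\<alpha>: "g \<alpha> = 1"
    and f_inv_\<alpha>: "f (1 / \<alpha>) \<noteq> 0"
    and f_ne_1: "\<forall>k \<in> subfield_Fq q - {0, 1}. f ((k - 1) / (k * (k - 1) * \<alpha> - k ^ 2)) \<noteq> 1"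
    and x: "x \<noteq> 0" and y: "y \<in> subfield_Fq q"
  shows "f x * g (1 / x) + \<alpha> \<noteq> y / x"
proof
  define c m where "c = f x" and "m = g (1 / x)"
  have c: "c \<in> subfield_Fq q" and m: "m \<in> subfield_Fq q"
    using f g by (simp_all add: c_def m_def Fq_linear_functional_mem)
  have g_lin: "g (a + b * \<alpha>) = a + b"
    if "a \<in> subfield_Fq q" "b \<in> subfield_Fq q" for a b
    using Fq_linear_functional_scale[OF g that(1), of 1]
      Fq_linear_functional_scale[OF g that(2), of \<alpha>] g1 g\<alpha>
    by (simp add: Fq_linear_functional_add[OF g])
  assume "f x * g (1 / x) + \<alpha> = y / x"
  then have eq: "c * m + \<alpha> = y / x" by (simp add: c_def m_def)
  consider "c = 0" | "y = 0" | "c \<noteq> 0" "y \<noteq> 0" by blast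
  then show False
  proof cases
    case 1
    have "\<alpha> \<noteq> 0"
      using g\<alpha> Fq_linear_functional_zero[OF g] by auto
    with 1 eq x have "y \<noteq> 0" and x_eq: "x = y * (1 / \<alpha>)" by auto
    have "f x = y * f (1 / \<alpha>)"
      unfolding x_eq by (rule Fq_linear_functional_scale[OF f y])
    with 1 f_inv_\<alpha> \<open>y \<noteq> 0\<close> show False by (simp add: c_def)
  next
    case 2
    with eq have "g (c * m + 1 * \<alpha>) = 0"
      by (simp add: Fq_linear_functional_zero[OF g])
    then have "c * m = - 1"
      using g_lin[OF subfield_Fq_mult[OF c m] subfield_Fq_one]
      by (simp add: eq_neg_iff_add_eq_0)
    with eq 2 have "\<alpha> = 1" by simp
    with \<alpha> show False by (simp add: subfield_Fq_def)
  next
    case 3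
    define k where "k = c / y"
    have "1 / x = c * m / y + (1 / y) * \<alpha>"
      using eq x 3 by (simp add: field_simps)
    then have "m = c * m / y + 1 / y"
      using g_lin[OF subfield_Fq_divide[OF subfield_Fq_mult[OF c m] y]
          subfield_Fq_divide[OF subfield_Fq_one y]]
      by (simp add: m_def)
    then have m_eq: "m * (y - c) = 1"
      using 3 by (simp add: field_simps)
    then have "k \<in> subfield_Fq q - {0, 1}"
      using 3 subfield_Fq_divide[OF c y] by (auto simp: k_def)
    moreover have "x / c = (k - 1) / (k * (k - 1) * \<alpha> - k ^ 2)"
      using 3 by (intro quotient_eq_if_common_point_relations[OF x \<open>y \<noteq> 0\<close> _ _ m_eq eq])
        (simp_all add: k_def)
    moreover have "f (x / c) = 1"
      using Fq_linear_functional_scale[OF f subfield_Fq_divide[OF subfield_Fq_one c], of x] 3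
      by (simp add: c_def)
    ultimately show False
      using f_ne_1 by auto
  qed
qed

theorem theorem3p4:
  fixes q h :: nat and f g :: "'a::{finite,field} \<Rightarrow> 'a" and \<alpha> :: 'a
  assumes "prime_power q" and "h \<ge> 2" and "card (UNIV :: 'a set) = q ^ h"
    and "Fq_linear_functional q f" and "\<exists>x. f x \<noteq> 0"
    and "Fq_linear_functional q g" and "\<exists>x. g x \<noteq> 0"
    and "\<alpha> \<notin> subfield_Fq q"
    and "g 1 = 1" and "g \<alpha> = 1"
    and "f (1 / \<alpha>) \<noteq> 0"
    and "\<forall>k \<in> subfield_Fq q - {0, 1}. f ((k - 1) / (k * (k - 1) * \<alpha> - k ^ 2)) \<noteq> 1"
  shows "setL q f \<inter> setL' q g \<alpha> = {}"
proof (rule ccontr)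
  assume "setL q f \<inter> setL' q g \<alpha> \<noteq> {}"
  then obtain P where "P \<in> setL q f" "P \<in> setL' q g \<alpha>" by blast
  then obtain x y where "x \<noteq> 0" "y \<in> subfield_Fq q" "f x * g (1 / x) + \<alpha> = y / x"
    by (rule setL_setL'_common_point_equation[OF assms(4,6)])
  with common_point_equation_unsolvable[OF assms(4,6,8-12)] show False
    by blast
qed

end
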